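(* Let $\mathbf X$ be a CAT(0) cube complex with no infinite family of pairwise-crossing hyperplanes, and suppose $\mathbf X$ is fully visible. Then $\mathbf X$ is an optical space.
   Context: A CAT(0) cube complex is a simply connected cube complex (cubes $[-\frac12,\frac12]^d$, $d$ finite) with flag vertex links; hyperplanes are connected subspaces meeting each cube in a midcube or not at all, each separating $\mathbf X$ into two halfspaces. Two hyperplanes cross if all four intersections of their halfspaces are nonempty. Combinatorial geodesics (rays, bi-infinite geodesics) are geodesics in the 1-skeleton path metric sending integers to 0-cubes; $\mathcal W(\alpha)$ is the set of hyperplanes dual to 1-cubes of $\alpha$. A set $\mathcal U$ of hyperplanes is inseparable if every hyperplane separating two elements of $\mathcal U$ lies in $\mathcal U$; unidirectional if each $U\in\mathcal U$ has a halfspace containing only finitely many elements of $\mathcal U$; a facing triple is three distinct hyperplanes each having a halfspace containing the other two. A unidirectional boundary set (UBS) is an infinite, inseparable, unidirectional set of hyperplanes with no facing triple; UBSs are almost-equivalent if their symmetric difference is finite; a UBS is minimal if every UBS inside it is almost-equivalent to it. Every UBS is almost-equivalent to a disjoint union of $k<\infty$ minimal UBSs $\mathcal U_1,\dots,\mathcal U_k$ with each element of $\mathcal U_j$ crossing all but finitely many elements of $\mathcal U_i$ for $i<j$, $k$ depending only on the class ($k$-dimensional). A $k$-simplex at infinity is an almost-equivalence class of $(k+1)$-dimensional UBSs, $u\le v$ iff there are representatives $\mathcal U\subseteq\mathcal V$; $\partial_\triangle\mathbf X$ is the geometric realization of the resulting simplicial complex. A simplex is visible if it is the class of $\mathcal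 W(\gamma)$ for a combinatorial geodesic ray $\gamma$; $\mathbf X$ is fully visible if every simplex of $\partial_\triangle\mathbf X$ is visible. A pair $u,v$ of visible simplices is a visible pair if there is a bi-infinite combinatorial geodesic $\gamma:\mathbb R\to\mathbf X$ with $\mathcal W(\gamma((-\infty,0]))$ representing $u$ and $\mathcal W(\gamma([0,\infty)))$ representing $v$. $\mathbf X$ is an optical space if, whenever a pair $u,v$ of 0-simplices of $\partial_\triangle\mathbf X$ is not a visible pair, $u=v$. *)

theory Defs
  imports Main
begin

text \<open>A CAT(0) cube complex is represented by its 1-skeleton, a median graph
  (Chepoi / Roller / Gerasimov: 1-skeleta of CAT(0) cube complexes are exactly
  median graphs, and the complex is recovered by filling in cubes).\<close>

definition walk :: "('a \<Rightarrow> 'a \<Rightarrow> bool) \<Rightarrow> 'a list \<Rightarrow> bool" where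
  "walk E xs \<longleftrightarrow> xs \<noteq> [] \<and> (\<forall>i. Suc i < length xs \<longrightarrow> E (xs ! i) (xs ! Suc i))"

definition connected_graph :: "('a \<Rightarrow> 'a \<Rightarrow> bool) \<Rightarrow> bool" where
  "connected_graph E \<longleftrightarrow> (\<forall>x y. \<exists>xs. walk E xs \<and> hd xs = x \<and> last xs = y)"

definition gdist :: "('a \<Rightarrow> 'a \<Rightarrow> bool) \<Rightarrow> 'a \<Rightarrow> 'a \<Rightarrow> nat" where
  "gdist E x y = (LEAST n. \<exists>xs. walk E xs \<and> hd xs = x \<and> last xs = y \<and> length xs = Suc n)"

definition interval :: "('a \<Rightarrow> 'a \<Rightarrow> bool) \<Rightarrow> 'a \<Rightarrow> 'a \<Rightarrow> 'a set" where
  "interval E x y = {m. gdist E x m + gdist E m y = gdist E x y}"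

definition median_graph :: "('a \<Rightarrow> 'a \<Rightarrow> bool) \<Rightarrow> bool" where
  "median_graph E \<longleftrightarrow> (\<forall>x y. E x y \<longrightarrow> E y x) \<and> (\<forall>x. \<not> E x x) \<and> connected_graph E \<and>
     (\<forall>x y z. \<exists>!m. m \<in> interval E x y \<inter> interval E y z \<inter> interval E x z)"

abbreviation CAT0_cube_complex :: "('a \<Rightarrow> 'a \<Rightarrow> bool) \<Rightarrow> bool" where
  "CAT0_cube_complex E \<equiv> median_graph E"

text \<open>Halfspace (vertex set) of the hyperplane dual to the edge uv containing u.\<close>
definition halfsp :: "('a \<Rightarrow> 'a \<Rightarrow> bool) \<Rightarrow> 'a \<Rightarrow> 'a \<Rightarrow> 'a set" where
  "halfsp E u v = {x. gdist E x u < gdist E x v}"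

text \<open>A hyperplane is represented by the (unordered) pair of its two halfspaces.\<close>
definition dual :: "('a \<Rightarrow> 'a \<Rightarrow> bool) \<Rightarrow> 'a \<Rightarrow> 'a \<Rightarrow> 'a set set" where
  "dual E u v = {halfsp E u v, halfsp E v u}"

definition hyperplanes :: "('a \<Rightarrow> 'a \<Rightarrow> bool) \<Rightarrow> 'a set set set" where
  "hyperplanes E = {dual E u v | u v. E u v}"

definition cross :: "'a set set \<Rightarrow> 'a set set \<Rightarrow> bool" where
  "cross H U \<longleftrightarrow> (\<forall>h\<in>H. \<forall>u\<in>U. h \<inter> u \<noteq> {})"

definition lies_in :: "'a set set \<Rightarrow> 'a set \<Rightarrow> 'a set set \<Rightarrow> bool" where
  "lies_in H s U \<longleftrightarrow> s \<in> H \<and> U \<noteq> H \<and> (\<exists>u\<in>U. u \<subseteq> s)"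

definition separates :: "'a set set \<Rightarrow> 'a set set \<Rightarrow> 'a set set \<Rightarrow> bool" where
  "separates H U U' \<longleftrightarrow> (\<exists>s\<in>H. \<exists>s'\<in>H. s \<noteq> s' \<and> lies_in H s U \<and> lies_in H s' U')"

definition inseparable :: "('a \<Rightarrow> 'a \<Rightarrow> bool) \<Rightarrow> 'a set set set \<Rightarrow> bool" where
  "inseparable E \<U> \<longleftrightarrow> (\<forall>U\<in>\<U>. \<forall>U'\<in>\<U>. \<forall>H\<in>hyperplanes E. separates H U U' \<longrightarrow> H \<in> \<U>)"

definition unidirectional :: "'a set set set \<Rightarrow> bool" where
  "unidirectional \<U> \<longleftrightarrow> (\<forall>U\<in>\<U>. \<exists>s\<in>U. finite {W\<in>\<U>. lies_in U s W})"

definition facing_triple :: "'a set set \<Rightarrow> 'a set set \<Rightarrow> 'a set set \<Rightarrow> bool" where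
  "facing_triple A B C \<longleftrightarrow> A \<noteq> B \<and> B \<noteq> C \<and> A \<noteq> C \<and>
     (\<exists>s\<in>A. lies_in A s B \<and> lies_in A s C) \<and>
     (\<exists>s\<in>B. lies_in B s A \<and> lies_in B s C) \<and>
     (\<exists>s\<in>C. lies_in C s A \<and> lies_in C s B)"

definition UBS :: "('a \<Rightarrow> 'a \<Rightarrow> bool) \<Rightarrow> 'a set set set \<Rightarrow> bool" where
  "UBS E \<U> \<longleftrightarrow> \<U> \<subseteq> hyperplanes E \<and> infinite \<U> \<and> inseparable E \<U> \<and> unidirectional \<U> \<and>
     \<not> (\<exists>A\<in>\<U>. \<exists>B\<in>\<U>. \<exists>C\<in>\<U>. facing_triple A B C)"

definition almost_equiv :: "'b set \<Rightarrow> 'b set \<Rightarrow> bool" where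
  "almost_equiv A B \<longleftrightarrow> finite ((A - B) \<union> (B - A))"

definition minimal_UBS :: "('a \<Rightarrow> 'a \<Rightarrow> bool) \<Rightarrow> 'a set set set \<Rightarrow> bool" where
  "minimal_UBS E \<U> \<longleftrightarrow> UBS E \<U> \<and> (\<forall>\<V>. \<V> \<subseteq> \<U> \<and> UBS E \<V> \<longrightarrow> almost_equiv \<V> \<U>)"

definition UBS_dim :: "('a \<Rightarrow> 'a \<Rightarrow> bool) \<Rightarrow> 'a set set set \<Rightarrow> nat \<Rightarrow> bool" where
  "UBS_dim E \<U> k \<longleftrightarrow> (\<exists>Us :: nat \<Rightarrow> 'a set set set.
      (\<forall>i<k. minimal_UBS E (Us i)) \<and>
      (\<forall>i<k. \<forall>j<k. i \<noteq> j \<longrightarrow> Us i \<inter> Us j = {}) \<and>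
      (\<forall>i j. i < j \<and> j < k \<longrightarrow> (\<forall>H\<in>Us j. finite {U\<in>Us i. \<not> cross H U})) \<and>
      almost_equiv \<U> (\<Union>i<k. Us i))"

definition geodesic_ray :: "('a \<Rightarrow> 'a \<Rightarrow> bool) \<Rightarrow> (nat \<Rightarrow> 'a) \<Rightarrow> bool" where
  "geodesic_ray E \<gamma> \<longleftrightarrow> (\<forall>m n. int (gdist E (\<gamma> m) (\<gamma> n)) = \<bar>int m - int n\<bar>)"

definition geodesic_line :: "('a \<Rightarrow> 'a \<Rightarrow> bool) \<Rightarrow> (int \<Rightarrow> 'a) \<Rightarrow> bool" where
  "geodesic_line E \<gamma> \<longleftrightarrow> (\<forall>m n. int (gdist E (\<gamma> m) (\<gamma> n)) = \<bar>m - n\<bar>)"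

definition W_ray :: "('a \<Rightarrow> 'a \<Rightarrow> bool) \<Rightarrow> (nat \<Rightarrow> 'a) \<Rightarrow> 'a set set set" where
  "W_ray E \<gamma> = {dual E (\<gamma> n) (\<gamma> (Suc n)) | n. True}"

definition W_neg :: "('a \<Rightarrow> 'a \<Rightarrow> bool) \<Rightarrow> (int \<Rightarrow> 'a) \<Rightarrow> 'a set set set" where
  "W_neg E \<gamma> = {dual E (\<gamma> (n - 1)) (\<gamma> n) | n. n \<le> 0}"

definition W_pos :: "('a \<Rightarrow> 'a \<Rightarrow> bool) \<Rightarrow> (int \<Rightarrow> 'a) \<Rightarrow> 'a set set set" where
  "W_pos E \<gamma> = {dual E (\<gamma> n) (\<gamma> (n + 1)) | n. n \<ge> 0}"

text \<open>Simplices at infinity are represented by UBS representatives: a k-simplex is the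
  almost-equivalence class of a (k+1)-dimensional UBS.\<close>
definition visible :: "('a \<Rightarrow> 'a \<Rightarrow> bool) \<Rightarrow> 'a set set set \<Rightarrow> bool" where
  "visible E \<U> \<longleftrightarrow> (\<exists>\<gamma>. geodesic_ray E \<gamma> \<and> almost_equiv (W_ray E \<gamma>) \<U>)"

definition fully_visible :: "('a \<Rightarrow> 'a \<Rightarrow> bool) \<Rightarrow> bool" where
  "fully_visible E \<longleftrightarrow> (\<forall>\<U> k. UBS E \<U> \<and> UBS_dim E \<U> (Suc k) \<longrightarrow> visible E \<U>)"

definition visible_pair :: "('a \<Rightarrow> 'a \<Rightarrow> bool) \<Rightarrow> 'a set set set \<Rightarrow> 'a set set set \<Rightarrow> bool" where
  "visible_pair E \<U> \<V> \<longleftrightarrow> visible E \<U> \<and> visible E \<V> \<and>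
     (\<exists>\<gamma>. geodesic_line E \<gamma> \<and> almost_equiv (W_neg E \<gamma>) \<U> \<and> almost_equiv (W_pos E \<gamma>) \<V>)"

definition optical :: "('a \<Rightarrow> 'a \<Rightarrow> bool) \<Rightarrow> bool" where
  "optical E \<longleftrightarrow> (\<forall>\<U> \<V>. UBS E \<U> \<and> UBS_dim E \<U> 1 \<and> UBS E \<V> \<and> UBS_dim E \<V> 1 \<and>
      \<not> visible_pair E \<U> \<V> \<longrightarrow> almost_equiv \<U> \<V>)"

definition no_infinite_crossing_family :: "('a \<Rightarrow> 'a \<Rightarrow> bool) \<Rightarrow> bool" where
  "no_infinite_crossing_family E \<longleftrightarrow>
     \<not> (\<exists>F. F \<subseteq> hyperplanes E \<and> infinite F \<and> (\<forall>H\<in>F. \<forall>U\<in>F. H \<noteq> U \<longrightarrow> cross H U))"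

end

theory Submission
  imports Defs
begin

text \<open>Represent the two 0-simplices by 1-dimensional UBSs U and V. By full visibility they are
  almost equal to the hyperplane sets of geodesic rays \<alpha> and \<beta>, and by definition of dimension
  to minimal UBSs U0 and V0. If U0 \<inter> V0 is infinite, it is a UBS inside both, so minimality makes
  U0 and V0 almost equal. Otherwise \<alpha> and \<beta> share only finitely many hyperplanes, and beyond
  them neither ray crosses a hyperplane that the other ray or a segment between the basepoints
  crosses. Since the distance of two vertices of a median graph is the number of hyperplanes
  separating them, the distance from \<alpha>(N + n) to \<beta>(M + n) is then 2n + d(\<alpha>(N), \<beta>(M)), so the
  reversed tail of \<alpha>, a geodesic from \<alpha>(N) to \<beta>(M) and the tail of \<beta> form a bi-infinite
  geodesic, and U, V are a visible pair.\<close>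

lemma walk_Cons_iff: "walk E (x # xs) \<longleftrightarrow> xs = [] \<or> E x (hd xs) \<and> walk E xs"
  by (cases xs) (auto simp: walk_def nth_Cons split: nat.splits)

lemma walk_singleton [simp]: "walk E [x]"
  by (simp add: walk_def)

lemma walk_append: "walk E xs \<Longrightarrow> walk E ys \<Longrightarrow> last xs = hd ys \<Longrightarrow> walk E (xs @ tl ys)"
proof (induction xs rule: induct_list012)
  case 1 then show ?case by (simp add: walk_def)
next
  case (2 x) then show ?case by (cases ys) (auto simp: walk_Cons_iff)
next
  case (3 x y zs) then show ?case by (auto simp: walk_Cons_iff)
qed

lemma walk_rev:
  assumes "\<And>x y. E x y \<Longrightarrow> E y x" and "walk E xs"
  shows "walk E (rev xs)"
  using assms(2)
proof (induction xs rule: induct_list012)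
  case 1 then show ?case by (simp add: walk_def)
next
  case (2 x) then show ?case by simp
next
  case (3 x y zs)
  then have "walk E (rev (y # zs) @ tl [y, x])"
    by (intro walk_append) (auto simp: walk_Cons_iff last_rev assms(1))
  then show ?case by simp
qed

section \<open>The path metric of a median graph\<close>

locale cat0_cube_complex =
  fixes E :: "'a \<Rightarrow> 'a \<Rightarrow> bool"
  assumes median_graph: "median_graph E"
begin

abbreviation d :: "'a \<Rightarrow> 'a \<Rightarrow> nat" where
  "d \<equiv> gdist E"

lemma edge_sym: "E x y \<Longrightarrow> E y x"
  using median_graph by (simp add: median_graph_def)

lemma edge_irrefl: "\<not> E x x"
  using median_graph by (simp add: median_graph_def)

lemma median_unique: "\<exists>!m. m \<in> interval E x y \<inter> interval E y z \<inter> interval E x z"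
  using median_graph unfolding median_graph_def by blast

lemma graph_connected: "connected_graph E"
  using median_graph by (simp add: median_graph_def)

lemma shortest_walk_exists:
  "\<exists>xs. walk E xs \<and> hd xs = x \<and> last xs = y \<and> length xs = Suc (d x y)"
proof -
  obtain xs where xs: "walk E xs" "hd xs = x" "last xs = y"
    using graph_connected unfolding connected_graph_def by blast
  then obtain n where "length xs = Suc n"
    by (cases xs) (auto simp: walk_def)
  with xs have "\<exists>n xs. walk E xs \<and> hd xs = x \<and> last xs = y \<and> length xs = Suc n"
    by blast
  then show ?thesis
    unfolding gdist_def by (rule LeastI_ex)
qed

lemma gdist_le_walk:
  assumes "walk E xs" "hd xs = x" "last xs = y"
  shows "d x y \<le> length xs - 1"
proof -
  have "length xs = Suc (length xs - 1)"
    using assms(1) by (cases xs) (auto simp: walk_def)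
  with assms show ?thesis
    unfolding gdist_def by (intro Least_le) metis
qed

lemma gdist_eq_0_iff [simp]: "d x y = 0 \<longleftrightarrow> x = y"
proof
  assume "d x y = 0"
  then obtain xs where "walk E xs" "hd xs = x" "last xs = y" "length xs = 1"
    using shortest_walk_exists[of x y] by auto
  then show "x = y" by (cases xs) auto
qed (use gdist_le_walk[of "[x]" x x] in simp)

lemma gdist_self [simp]: "d x x = 0"
  by simp

lemma gdist_eq_1_iff: "d x y = 1 \<longleftrightarrow> E x y"
proof
  assume "d x y = 1"
  then obtain xs where xs: "walk E xs" "hd xs = x" "last xs = y" "length xs = 2"
    using shortest_walk_exists[of x y] by auto
  then obtain a b where "xs = [a, b]"
    by (cases xs; cases "tl xs") auto
  with xs show "E x y" by (auto simp: walk_Cons_iff)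
next
  assume "E x y"
  then have "walk E [x, y]" and "d x y \<noteq> 0"
    using edge_irrefl by (auto simp: walk_Cons_iff)
  then show "d x y = 1"
    using gdist_le_walk[of "[x, y]" x y] by (simp del: gdist_eq_0_iff)
qed

lemma gdist_triangle: "d x z \<le> d x y + d y z"
proof -
  obtain xs where xs: "walk E xs" "hd xs = x" "last xs = y" "length xs = Suc (d x y)"
    using shortest_walk_exists by blast
  obtain ys where ys: "walk E ys" "hd ys = y" "last ys = z" "length ys = Suc (d y z)"
    using shortest_walk_exists by blast
  have "walk E (xs @ tl ys)" "hd (xs @ tl ys) = x" "last (xs @ tl ys) = z"
    using walk_append[OF xs(1) ys(1)] xs ys by (cases xs; cases ys; auto)+
  from gdist_le_walk[OF this] show ?thesis
    using xs ys by simp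
qed

lemma gdist_commute: "d x y = d y x"
proof -
  have le: "d a b \<le> d b a" for a b
  proof -
    obtain xs where xs: "walk E xs" "hd xs = b" "last xs = a" "length xs = Suc (d b a)"
      using shortest_walk_exists by blast
    have "walk E (rev xs)"
      using walk_rev[OF _ xs(1)] edge_sym by blast
    from gdist_le_walk[OF this] show ?thesis
      using xs by (simp add: hd_rev last_rev)
  qed
  show ?thesis using le[of x y] le[of y x] by simp
qed

lemma gdist_edge_le: "E x y \<Longrightarrow> d x z \<le> d y z + 1"
  using gdist_triangle[of x z y] gdist_eq_1_iff[of x y] by simp

lemma gdist_Suc_imp_step: "d x y = Suc k \<Longrightarrow> \<exists>z. E x z \<and> d z y = k"
proof -
  assume dxy: "d x y = Suc k"
  obtain xs where xs: "walk E xs" "hd xs = x" "last xs = y" "length xs = Suc (d x y)"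
    using shortest_walk_exists by blast
  then obtain zs where zs: "xs = x # zs"
    by (cases xs) auto
  with xs dxy have "zs \<noteq> []"
    by auto
  then have "E x (hd zs)" "walk E zs"
    using xs zs by (auto simp: walk_Cons_iff)
  moreover have "d (hd zs) y \<le> k"
    using gdist_le_walk[OF \<open>walk E zs\<close>] xs zs \<open>zs \<noteq> []\<close> dxy by auto
  ultimately show ?thesis
    using gdist_edge_le[of x "hd zs" y] dxy by (intro exI[of _ "hd zs"]) simp
qed

text \<open>Bipartiteness: the median of x, u, v is u or v.\<close>
lemma gdist_edge_neq: "E u v \<Longrightarrow> d x u \<noteq> d x v"
proof
  assume uv: "E u v" and eq: "d x u = d x v"
  obtain m where m: "m \<in> interval E x u \<inter> interval E u v \<inter> interval E x v"
    using median_unique by blast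
  have duv: "d u v = 1" "d v u = 1"
    using uv edge_sym gdist_eq_1_iff by auto
  then have "d u m + d m v = 1"
    using m by (simp add: interval_def)
  then have "d u m = 0 \<or> d m v = 0"
    by arith
  then have "m = u \<or> m = v"
    by auto
  with m eq duv show False
    unfolding interval_def by fastforce
qed

lemma gdist_edge_cases:
  assumes "E u v"
  shows "d x v = d x u + 1 \<or> d x u = d x v + 1"
  using gdist_edge_neq[OF assms, of x] gdist_edge_le[OF assms, of x]
    gdist_edge_le[OF edge_sym[OF assms], of x] gdist_commute[of u x] gdist_commute[of v x]
  by linarith

end

section \<open>Hyperplanes and separation\<close>

lemma dual_commute: "dual E u v = dual E v u"
  by (auto simp: dual_def)

lemma dual_in_hyperplanes: "E u v \<Longrightarrow> dual E u v \<in> hyperplanes E"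
  by (auto simp: hyperplanes_def)

lemma hyperplanesE:
  assumes "H \<in> hyperplanes E"
  obtains u v where "E u v" "H = dual E u v"
  using assms by (auto simp: hyperplanes_def)

definition sepset :: "('a \<Rightarrow> 'a \<Rightarrow> bool) \<Rightarrow> 'a \<Rightarrow> 'a \<Rightarrow> 'a set set set" where
  "sepset E x y = {H \<in> hyperplanes E. \<exists>h\<in>H. x \<in> h \<and> y \<notin> h}"

context cat0_cube_complex
begin

lemma halfsp_swap: "E u v \<Longrightarrow> x \<in> halfsp E v u \<longleftrightarrow> x \<notin> halfsp E u v"
  using gdist_edge_neq[of u v x] by (auto simp: halfsp_def)

lemma gdist_common_neighbour:
  assumes "E a b" "E a c" "b \<noteq> c"
  shows "d b c = 2"
proof -
  have "d b c \<le> d b a + d a c"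
    by (rule gdist_triangle)
  moreover have "d b a = 1" "d a b = 1" "d a c = 1"
    using assms edge_sym gdist_eq_1_iff by auto
  moreover from this have "\<not> E b c"
    using gdist_edge_neq[of b c a] by auto
  then have "d b c \<noteq> 1"
    using gdist_eq_1_iff by auto
  ultimately show ?thesis
    using assms(3) by (cases "d b c") auto
qed

text \<open>Otherwise a and b' would both be medians of x, b and a1.\<close>
lemma closer_across_square:
  assumes e: "E a b" "E a a1" "E b b'" "E a1 b'" and ne: "a \<noteq> b'" "b \<noteq> a1"
    and x: "d x a < d x b"
  shows "d x a1 < d x b'"
proof (rule ccontr)
  assume "\<not> d x a1 < d x b'"
  then have a1: "d x a1 = d x b' + 1"
    using gdist_edge_cases[OF e(4), of x] by auto
  have b: "d x b = d x a + 1"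
    using gdist_edge_cases[OF e(1), of x] x by auto
  have b': "d x b' = d x a"
    using a1 b gdist_edge_le[OF edge_sym[OF e(2)], of x] gdist_edge_le[OF e(3), of x]
    by (simp add: gdist_commute)
  have edges: "d a b = 1" "d b a = 1" "d a a1 = 1" "d b' b = 1" "d b b' = 1" "d b' a1 = 1"
    using e edge_sym gdist_eq_1_iff by auto
  have "a \<in> interval E x b \<inter> interval E b a1 \<inter> interval E x a1"
    "b' \<in> interval E x b \<inter> interval E b a1 \<inter> interval E x a1"
    using edges a1 b b' gdist_common_neighbour[OF e(1,2) ne(2)]
    by (simp_all add: interval_def)
  then show False
    using median_unique[of x b a1] ne(1) by blast
qed

lemma halfsp_eq_opposite_edge:
  assumes e: "E a b" "E a a1" "E b m" "E a1 m" and ne: "a \<noteq> m" "b \<noteq> a1"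
  shows "halfsp E a b = halfsp E a1 m"
proof (intro set_eqI iffI)
  fix x
  show "x \<in> halfsp E a1 m" if "x \<in> halfsp E a b"
    using closer_across_square[OF e ne] that by (simp add: halfsp_def)
  show "x \<in> halfsp E a b" if "x \<in> halfsp E a1 m"
  proof -
    have "\<not> d x b < d x a"
      using closer_across_square[OF edge_sym[OF e(1)] e(3) e(2) edge_sym[OF e(4)] ne(2) ne(1), of x]
        that by (auto simp: halfsp_def)
    then show ?thesis
      using gdist_edge_neq[OF e(1), of x] by (simp add: halfsp_def)
  qed
qed

text \<open>The edge a b is pushed towards u along a square a b m a1, where a1 is a neighbour of a
  closer to u and m is the median of a1, b and v.\<close>
lemma crossing_edge_closer:
  assumes uv: "E u v" and ab: "E a b" "a \<in> halfsp E u v" "b \<in> halfsp E v u"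
    and k: "d a u = Suc k"
  obtains a1 m where "E a1 m" "d a1 u = k" "a1 \<in> halfsp E u v" "m \<in> halfsp E v u"
    "halfsp E a b = halfsp E a1 m"
proof -
  have dav: "d a v = k + 2"
    using gdist_edge_cases[OF uv, of a] ab k by (auto simp: halfsp_def)
  have dbv: "d b v = k + 1" and dbu: "d b u = k + 2"
    using gdist_edge_le[OF edge_sym[OF ab(1)], of u] gdist_edge_le[OF ab(1), of v]
      gdist_edge_cases[OF uv, of b] ab k dav by (auto simp: halfsp_def)
  obtain a1 where a1: "E a a1" "d a1 u = k"
    using gdist_Suc_imp_step[OF k] by blast
  have da1v: "d a1 v = k + 1"
    using gdist_edge_le[OF a1(1), of v] gdist_triangle[of a1 v u] a1(2) dav
      gdist_eq_1_iff[of u v] uv by simp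
  have ba1: "b \<noteq> a1"
    using dbu a1 by auto
  obtain m where m: "m \<in> interval E a1 b \<inter> interval E b v \<inter> interval E a1 v"
    using median_unique by blast
  have "d a1 m + d m b = 2" "d b m + d m v = k + 1" "d a1 m + d m v = k + 1"
    using m gdist_common_neighbour[OF ab(1) a1(1) ba1] dbv da1v gdist_commute[of a1 b]
    by (auto simp: interval_def)
  then have dm: "d a1 m = 1" "d b m = 1" "d m v = k"
    using gdist_commute[of m b] by auto
  then have a1m: "E a1 m" and bm: "E b m"
    using gdist_eq_1_iff by auto
  show thesis
  proof
    show "E a1 m" "d a1 u = k" by fact+
    show "a1 \<in> halfsp E u v"
      using a1 da1v by (simp add: halfsp_def)
    show "m \<in> halfsp E v u"
      using gdist_edge_le[OF bm, of u] dbu dm by (simp add: halfsp_def)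
    show "halfsp E a b = halfsp E a1 m"
      using dav dm by (intro halfsp_eq_opposite_edge[OF ab(1) a1(1) bm a1m]) (auto simp: ba1)
  qed
qed

lemma halfsp_eq_if_crossing_edge:
  assumes uv: "E u v"
  shows "E a b \<Longrightarrow> a \<in> halfsp E u v \<Longrightarrow> b \<in> halfsp E v u \<Longrightarrow> halfsp E a b = halfsp E u v"
proof (induction "d a u" arbitrary: a b)
  case 0
  then have "a = u"
    by simp
  moreover have "d b v = 0"
    using "0" gdist_edge_le[OF edge_sym[OF "0.prems"(1)], of u]
    by (simp add: halfsp_def del: gdist_eq_0_iff)
  ultimately show ?case
    by simp
next
  case (Suc k)
  then obtain a1 m where "E a1 m" "d a1 u = k" "a1 \<in> halfsp E u v" "m \<in> halfsp E v u"
    "halfsp E a b = halfsp E a1 m"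
    using crossing_edge_closer[OF uv, of a b k] by metis
  then show ?case
    using Suc.hyps(1) by metis
qed

lemma dual_eq_if_crossing_edge:
  assumes "E u v" "E a b" "a \<in> halfsp E u v" "b \<in> halfsp E v u"
  shows "dual E a b = dual E u v"
proof -
  have "halfsp E a b = halfsp E u v"
    using halfsp_eq_if_crossing_edge assms by blast
  moreover then have "halfsp E b a = halfsp E v u"
    using halfsp_swap[OF assms(1)] halfsp_swap[OF assms(2)] by blast
  ultimately show ?thesis
    by (simp add: dual_def)
qed

lemma dual_in_sepset_iff:
  "E u v \<Longrightarrow> dual E u v \<in> sepset E x y \<longleftrightarrow> (x \<in> halfsp E u v \<longleftrightarrow> y \<notin> halfsp E u v)"
  using halfsp_swap[of u v] dual_in_hyperplanes[of E u v] by (auto simp: sepset_def dual_def)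

lemma sepset_xor:
  "H \<in> hyperplanes E \<Longrightarrow> H \<in> sepset E x z \<longleftrightarrow> (H \<in> sepset E x y) \<noteq> (H \<in> sepset E y z)"
  by (elim hyperplanesE) (simp add: dual_in_sepset_iff, blast)

lemma sepset_commute: "sepset E x y = sepset E y x"
proof -
  have "H \<in> sepset E x y \<longleftrightarrow> H \<in> sepset E y x" for H
    using sepset_xor[of H x x y] by (cases "H \<in> hyperplanes E") (auto simp: sepset_def)
  then show ?thesis
    by blast
qed

lemma sepset_edge:
  assumes xy: "E x y"
  shows "sepset E x y = {dual E x y}"
proof (intro equalityI subsetI)
  fix H assume H: "H \<in> sepset E x y"
  then obtain u v where uv: "E u v" "H = dual E u v"
    by (auto simp: sepset_def elim: hyperplanesE)
  then have "x \<in> halfsp E u v \<and> y \<in> halfsp E v u \<or> x \<in> halfsp E v u \<and> y \<in> halfsp E u v"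
    using H dual_in_sepset_iff halfsp_swap by blast
  then show "H \<in> {dual E x y}"
    using dual_eq_if_crossing_edge[OF uv(1) xy] dual_eq_if_crossing_edge[OF edge_sym[OF uv(1)] xy]
      uv(2) dual_commute[of E u v] by auto
next
  fix H assume "H \<in> {dual E x y}"
  then show "H \<in> sepset E x y"
    using dual_in_sepset_iff[OF xy] xy gdist_eq_1_iff[of x y] gdist_eq_1_iff[of y x] edge_sym
    by (simp add: halfsp_def)
qed

lemma finite_card_sepset: "finite (sepset E x y) \<and> card (sepset E x y) = d x y"
proof (induction "d x y" arbitrary: x)
  case 0
  then show ?case
    by (simp add: sepset_def)
next
  case (Suc k)
  then obtain z where z: "E x z" "d z y = k"
    using gdist_Suc_imp_step by metis
  have "y \<notin> halfsp E x z" "z \<notin> halfsp E x z"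
    using z Suc.hyps(2) gdist_eq_1_iff[of z x] edge_sym gdist_commute[of y]
    by (auto simp: halfsp_def)
  then have notin: "dual E x z \<notin> sepset E z y"
    using dual_in_sepset_iff[OF z(1)] by simp
  have "H \<in> sepset E x y \<longleftrightarrow> H \<in> insert (dual E x z) (sepset E z y)" for H
  proof (cases "H \<in> hyperplanes E")
    case True
    then show ?thesis
      using sepset_xor[OF True, of x y z] sepset_edge[OF z(1)] notin by auto
  qed (use dual_in_hyperplanes[of E, OF z(1)] in \<open>auto simp: sepset_def\<close>)
  then have "sepset E x y = insert (dual E x z) (sepset E z y)"
    by blast
  then show ?case
    using Suc.hyps(1)[of z] z notin Suc.hyps(2) by simp
qed

lemma finite_sepset: "finite (sepset E x y)"
  using finite_card_sepset by blast

lemma card_sepset: "card (sepset E x y) = d x y"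
  using finite_card_sepset by blast

text \<open>The hyperplanes separating x' from y' are the symmetric difference of the three sets.\<close>
lemma gdist_eq_sum_if_sepsets_disjoint:
  assumes "sepset E x' x \<inter> sepset E x y = {}" "sepset E x y \<inter> sepset E y y' = {}"
    "sepset E x' x \<inter> sepset E y y' = {}"
  shows "d x' y' = d x' x + d x y + d y y'"
proof -
  have "H \<in> sepset E x' y' \<longleftrightarrow> H \<in> sepset E x' x \<union> sepset E x y \<union> sepset E y y'" for H
  proof (cases "H \<in> hyperplanes E")
    case True
    then show ?thesis
      using sepset_xor[OF True, of x' y' x] sepset_xor[OF True, of x y' y] assms by blast
  qed (auto simp: sepset_def)
  then have "sepset E x' y' = sepset E x' x \<union> sepset E x y \<union> sepset E y y'"
    by blast
  then have "card (sepset E x' y') =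
      card (sepset E x' x) + card (sepset E x y) + card (sepset E y y')"
    using assms by (simp add: card_Un_disjoint finite_sepset Int_Un_distrib2)
  then show ?thesis
    by (simp add: card_sepset)
qed

end

definition ray_hyperplane :: "('a \<Rightarrow> 'a \<Rightarrow> bool) \<Rightarrow> (nat \<Rightarrow> 'a) \<Rightarrow> nat \<Rightarrow> 'a set set" where
  "ray_hyperplane E \<alpha> n = dual E (\<alpha> n) (\<alpha> (Suc n))"

lemma W_ray_eq_range: "W_ray E \<alpha> = range (ray_hyperplane E \<alpha>)"
  by (auto simp: W_ray_def ray_hyperplane_def)

context cat0_cube_complex
begin

lemma gdist_ray: "geodesic_ray E \<alpha> \<Longrightarrow> d (\<alpha> i) (\<alpha> j) = (if i \<le> j then j - i else i - j)"
  unfolding geodesic_ray_def by (drule spec[of _ i], drule spec[of _ j]) auto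

lemma ray_edge: "geodesic_ray E \<alpha> \<Longrightarrow> E (\<alpha> n) (\<alpha> (Suc n))"
  using gdist_ray[of \<alpha> n "Suc n"] gdist_eq_1_iff by simp

lemma ray_hyperplane_in_hyperplanes: "geodesic_ray E \<alpha> \<Longrightarrow> ray_hyperplane E \<alpha> n \<in> hyperplanes E"
  using dual_in_hyperplanes[of E, OF ray_edge] by (simp add: ray_hyperplane_def)

lemma ray_hyperplane_in_sepset_iff:
  assumes "geodesic_ray E \<alpha>"
  shows "ray_hyperplane E \<alpha> k \<in> sepset E (\<alpha> i) (\<alpha> j) \<longleftrightarrow> (i \<le> k) \<noteq> (j \<le> k)"
proof -
  have "\<alpha> i \<in> halfsp E (\<alpha> k) (\<alpha> (Suc k)) \<longleftrightarrow> i \<le> k" for i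
    using gdist_ray[OF assms, of i k] gdist_ray[OF assms, of i "Suc k"] by (auto simp: halfsp_def)
  then show ?thesis
    unfolding ray_hyperplane_def using dual_in_sepset_iff[OF ray_edge[OF assms]] by blast
qed

lemma inj_ray_hyperplane:
  assumes "geodesic_ray E \<alpha>"
  shows "inj (ray_hyperplane E \<alpha>)"
proof (rule injI)
  fix k m assume eq: "ray_hyperplane E \<alpha> k = ray_hyperplane E \<alpha> m"
  show "k = m"
    using ray_hyperplane_in_sepset_iff[OF assms, of k k "Suc k"]
      ray_hyperplane_in_sepset_iff[OF assms, of m k "Suc k"]
      ray_hyperplane_in_sepset_iff[OF assms, of m m "Suc m"]
      ray_hyperplane_in_sepset_iff[OF assms, of k m "Suc m"] eq
    by (cases k m rule: linorder_cases) auto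
qed

lemma sepset_ray:
  assumes "geodesic_ray E \<alpha>" "a \<le> b"
  shows "sepset E (\<alpha> a) (\<alpha> b) = ray_hyperplane E \<alpha> ` {a..<b}"
proof -
  have sub: "ray_hyperplane E \<alpha> ` {a..<b} \<subseteq> sepset E (\<alpha> a) (\<alpha> b)"
    using ray_hyperplane_in_sepset_iff[OF assms(1)] by auto
  have "card (ray_hyperplane E \<alpha> ` {a..<b}) = b - a"
    using card_image[OF inj_on_subset[OF inj_ray_hyperplane[OF assms(1)]]] by simp
  also have "\<dots> = card (sepset E (\<alpha> a) (\<alpha> b))"
    using card_sepset gdist_ray[OF assms(1), of a b] assms(2) by simp
  finally show ?thesis
    using card_subset_eq[OF finite_sepset sub] by simp
qed

lemma ray_hyperplane_notin_sepset_rays: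
  assumes \<alpha>: "geodesic_ray E \<alpha>" and \<beta>: "geodesic_ray E \<beta>"
    and j: "ray_hyperplane E \<alpha> j \<notin> W_ray E \<beta> \<union> sepset E (\<alpha> 0) (\<beta> 0)" and "i \<le> j"
  shows "ray_hyperplane E \<alpha> j \<notin> sepset E (\<alpha> i) (\<beta> k)"
proof -
  let ?H = "ray_hyperplane E \<alpha> j"
  have H: "?H \<in> hyperplanes E"
    using ray_hyperplane_in_hyperplanes[OF \<alpha>] .
  have "?H \<notin> sepset E (\<alpha> i) (\<alpha> 0)"
    using ray_hyperplane_in_sepset_iff[OF \<alpha>, of j i 0] \<open>i \<le> j\<close> by simp
  moreover have "?H \<notin> sepset E (\<beta> 0) (\<beta> k)"
    using j sepset_ray[OF \<beta>, of 0 k] by (auto simp: W_ray_eq_range)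
  ultimately show ?thesis
    using j sepset_xor[OF H, of "\<alpha> i" "\<beta> k" "\<alpha> 0"] sepset_xor[OF H, of "\<alpha> 0" "\<beta> k" "\<beta> 0"]
    by blast
qed

lemma gdist_rays_diverge:
  assumes \<alpha>: "geodesic_ray E \<alpha>" and \<beta>: "geodesic_ray E \<beta>"
    and N: "\<And>j. N \<le> j \<Longrightarrow> ray_hyperplane E \<alpha> j \<notin> W_ray E \<beta> \<union> sepset E (\<alpha> 0) (\<beta> 0)"
    and M: "\<And>j. M \<le> j \<Longrightarrow> ray_hyperplane E \<beta> j \<notin> W_ray E \<alpha> \<union> sepset E (\<beta> 0) (\<alpha> 0)"
  shows "d (\<alpha> (N + n)) (\<beta> (M + n)) = n + d (\<alpha> N) (\<beta> M) + n"
proof -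
  have A: "sepset E (\<alpha> (N + n)) (\<alpha> N) = ray_hyperplane E \<alpha> ` {N..<N + n}"
    using sepset_ray[OF \<alpha>, of N "N + n"] by (simp add: sepset_commute)
  have B: "sepset E (\<beta> M) (\<beta> (M + n)) = ray_hyperplane E \<beta> ` {M..<M + n}"
    using sepset_ray[OF \<beta>, of M "M + n"] by simp
  have "sepset E (\<alpha> (N + n)) (\<alpha> N) \<inter> sepset E (\<alpha> N) (\<beta> M) = {}"
    unfolding A using ray_hyperplane_notin_sepset_rays[OF \<alpha> \<beta> N] by auto
  moreover have "sepset E (\<alpha> N) (\<beta> M) \<inter> sepset E (\<beta> M) (\<beta> (M + n)) = {}"
    unfolding B using ray_hyperplane_notin_sepset_rays[OF \<beta> \<alpha> M] by (auto simp: sepset_commute)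
  moreover have "sepset E (\<alpha> (N + n)) (\<alpha> N) \<inter> sepset E (\<beta> M) (\<beta> (M + n)) = {}"
    unfolding A B using N by (fastforce simp: W_ray_eq_range)
  ultimately show ?thesis
    using gdist_eq_sum_if_sepsets_disjoint gdist_ray[OF \<alpha>, of "N + n" N]
      gdist_ray[OF \<beta>, of M "M + n"] by simp
qed

end

lemma almost_equiv_sym: "almost_equiv A B \<Longrightarrow> almost_equiv B A"
  by (simp add: almost_equiv_def Un_commute)

lemma almost_equiv_trans: "almost_equiv A B \<Longrightarrow> almost_equiv B C \<Longrightarrow> almost_equiv A C"
  unfolding almost_equiv_def by (rule finite_subset[rotated], rule finite_UnI) blast+

lemma almost_equiv_finite_Un: "finite F \<Longrightarrow> almost_equiv (F \<union> A) A"
  unfolding almost_equiv_def by (rule finite_subset[of _ F]) auto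

lemma almost_equiv_finite_Int:
  assumes "almost_equiv A A'" "almost_equiv B B'" "finite (A' \<inter> B')"
  shows "finite (A \<inter> B)"
proof -
  have "A \<inter> B \<subseteq> (A' \<inter> B') \<union> (A - A') \<union> (B - B')"
    by blast
  then show ?thesis
    using assms unfolding almost_equiv_def by (simp add: finite_subset)
qed

lemma almost_equiv_W_ray_shift: "almost_equiv (W_ray E (\<lambda>n. \<alpha> (N + n))) (W_ray E \<alpha>)"
proof -
  have "{N..} = range ((+) N)"
    by (auto dest: le_Suc_ex)
  then have "W_ray E (\<lambda>n. \<alpha> (N + n)) = ray_hyperplane E \<alpha> ` {N..}"
    by (simp add: W_ray_eq_range ray_hyperplane_def image_image)
  moreover have
    "range (ray_hyperplane E \<alpha>) - ray_hyperplane E \<alpha> ` {N..} \<subseteq> ray_hyperplane E \<alpha> ` {..<N}"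
    by (auto simp: image_iff) (metis atLeast_iff lessThan_iff not_le)
  ultimately show ?thesis
    unfolding almost_equiv_def W_ray_eq_range
    by (metis Diff_eq_empty_iff Un_empty_left finite_imageI finite_lessThan finite_subset
        image_mono subset_UNIV)
qed

lemma W_neg_eq_W_ray:
  assumes "\<And>n. \<gamma> (- int n) = \<alpha> n"
  shows "W_neg E \<gamma> = W_ray E \<alpha>"
proof -
  have step: "dual E (\<gamma> (n - 1)) (\<gamma> n) = dual E (\<alpha> (nat (- n))) (\<alpha> (Suc (nat (- n))))"
    if "n \<le> 0" for n
  proof -
    have "n = - int (nat (- n))" "n - 1 = - int (Suc (nat (- n)))"
      using that by auto
    then show ?thesis
      using assms dual_commute by metis
  qed
  show ?thesis
  proof (intro equalityI subsetI)
    fix H assume "H \<in> W_neg E \<gamma>"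
    then show "H \<in> W_ray E \<alpha>"
      using step by (auto simp: W_neg_def W_ray_def)
  next
    fix H assume "H \<in> W_ray E \<alpha>"
    then obtain k where "H = dual E (\<alpha> k) (\<alpha> (Suc k))"
      by (auto simp: W_ray_def)
    then show "H \<in> W_neg E \<gamma>"
      using step[of "- int k"] unfolding W_neg_def by force
  qed
qed

lemma almost_equiv_W_pos_W_ray:
  assumes "\<And>n. \<gamma> (int K + int n) = \<beta> n"
  shows "almost_equiv (W_pos E \<gamma>) (W_ray E \<beta>)"
proof -
  have shift: "dual E (\<gamma> (int K + int n)) (\<gamma> (int K + int n + 1)) = dual E (\<beta> n) (\<beta> (Suc n))" for n
  proof -
    have "int K + int n + 1 = int K + int (Suc n)"
      by simp
    then show ?thesis
      using assms[of n] assms[of "Suc n"] by (simp only:)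
  qed
  let ?F = "(\<lambda>i. dual E (\<gamma> i) (\<gamma> (i + 1))) ` {0..<int K}"
  have "W_pos E \<gamma> = ?F \<union> W_ray E \<beta>"
  proof (intro equalityI subsetI)
    fix H assume "H \<in> W_pos E \<gamma>"
    then obtain i where i: "0 \<le> i" "H = dual E (\<gamma> i) (\<gamma> (i + 1))"
      by (auto simp: W_pos_def)
    show "H \<in> ?F \<union> W_ray E \<beta>"
    proof (cases "i < int K")
      case False
      then have "i = int K + int (nat (i - int K))"
        by simp
      then have "H = dual E (\<beta> (nat (i - int K))) (\<beta> (Suc (nat (i - int K))))"
        using i(2) shift by metis
      then show ?thesis
        by (auto simp: W_ray_def)
    qed (use i in auto)
  next
    fix H assume "H \<in> ?F \<union> W_ray E \<beta>"
    then show "H \<in> W_pos E \<gamma>"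
    proof
      assume "H \<in> W_ray E \<beta>"
      then obtain n where "H = dual E (\<beta> n) (\<beta> (Suc n))"
        by (auto simp: W_ray_def)
      then show ?thesis
        using shift[of n] unfolding W_pos_def by force
    qed (auto simp: W_pos_def)
  qed
  then show ?thesis
    by (simp add: almost_equiv_finite_Un)
qed

section \<open>Joining two rays into a line\<close>

lemma inj_eventually_notin_finite:
  fixes f :: "nat \<Rightarrow> 'b"
  assumes "inj f" "finite X"
  obtains N where "\<And>j. N \<le> j \<Longrightarrow> f j \<notin> X"
proof -
  have "finite (f -` X)"
    using finite_vimageI[OF assms(2,1)] .
  then obtain N where "\<forall>j\<in>f -` X. j < N"
    using finite_nat_set_iff_bounded by blast
  then show thesis
    using that by (meson leD vimageI)
qed

lemma geodesic_ray_shift: "geodesic_ray E \<alpha> \<Longrightarrow> geodesic_ray E (\<lambda>n. \<alpha> (N + n))"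
  unfolding geodesic_ray_def by simp

definition join_rays :: "(nat \<Rightarrow> 'a) \<Rightarrow> 'a list \<Rightarrow> (nat \<Rightarrow> 'a) \<Rightarrow> int \<Rightarrow> 'a" where
  "join_rays \<alpha> p \<beta> i =
    (if i \<le> 0 then \<alpha> (nat (- i))
     else if i < int (length p) then p ! nat i
     else \<beta> (nat i + 1 - length p))"

lemma join_rays_neg: "join_rays \<alpha> p \<beta> (- int n) = \<alpha> n"
  by (simp add: join_rays_def)

lemma join_rays_path: "hd p = \<alpha> 0 \<Longrightarrow> i < length p \<Longrightarrow> join_rays \<alpha> p \<beta> (int i) = p ! i"
  by (cases p) (auto simp: join_rays_def)

lemma join_rays_pos:
  assumes "p \<noteq> []" "hd p = \<alpha> 0" "last p = \<beta> 0"
  shows "join_rays \<alpha> p \<beta> (int (length p - 1) + int n) = \<beta> n"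
  using assms by (cases p rule: rev_cases) (auto simp: join_rays_def nth_append nat_int_add)

context cat0_cube_complex
begin

lemma gdist_le_of_steps:
  assumes "\<And>i. d (\<gamma> i) (\<gamma> (i + 1)) \<le> 1"
  shows "d (\<gamma> m) (\<gamma> (m + int k)) \<le> k"
proof (induction k)
  case (Suc k)
  have "d (\<gamma> m) (\<gamma> (m + int (Suc k))) \<le>
      d (\<gamma> m) (\<gamma> (m + int k)) + d (\<gamma> (m + int k)) (\<gamma> (m + int k + 1))"
    using gdist_triangle by (metis add.assoc of_nat_Suc add.commute)
  then show ?case
    using Suc assms[of "m + int k"] by simp
qed simp

text \<open>A shortcut between m and n would give a path from -t to L + t shorter than 2t + L.\<close>
lemma geodesic_line_if_stretched:
  assumes step: "\<And>i. d (\<gamma> i) (\<gamma> (i + 1)) \<le> 1"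
    and far: "\<And>t. 2 * t + L \<le> d (\<gamma> (- int t)) (\<gamma> (int L + int t))"
  shows "geodesic_line E \<gamma>"
proof -
  have le: "int (d (\<gamma> m) (\<gamma> n)) = n - m" if "m \<le> n" for m n
  proof -
    define t where "t = nat (max (- m) (n - int L))"
    have t: "- int t \<le> m" "n \<le> int L + int t"
      unfolding t_def by auto
    have "2 * t + L \<le> d (\<gamma> (- int t)) (\<gamma> m) + d (\<gamma> m) (\<gamma> n) + d (\<gamma> n) (\<gamma> (int L + int t))"
      using far[of t] gdist_triangle[of "\<gamma> (- int t)" "\<gamma> (int L + int t)" "\<gamma> m"]
        gdist_triangle[of "\<gamma> m" "\<gamma> (int L + int t)" "\<gamma> n"] by linarith
    moreover have "d (\<gamma> (- int t)) (\<gamma> m) \<le> nat (m + int t)"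
      using gdist_le_of_steps[of \<gamma>, OF step, of "- int t" "nat (m + int t)"] t by simp
    moreover have "d (\<gamma> n) (\<gamma> (int L + int t)) \<le> nat (int L + int t - n)"
      using gdist_le_of_steps[of \<gamma>, OF step, of n "nat (int L + int t - n)"] t by simp
    moreover have "d (\<gamma> m) (\<gamma> n) \<le> nat (n - m)"
      using gdist_le_of_steps[of \<gamma>, OF step, of m "nat (n - m)"] that by simp
    ultimately show ?thesis
      using t that by linarith
  qed
  show ?thesis
    unfolding geodesic_line_def
  proof (intro allI)
    fix m n :: int
    show "int (d (\<gamma> m) (\<gamma> n)) = \<bar>m - n\<bar>"
      using le[of m n] le[of n m] gdist_commute[of "\<gamma> m"] by (cases "m \<le> n") auto
  qed
qed

lemma gdist_join_rays_step:
  assumes \<alpha>: "geodesic_ray E \<alpha>" and \<beta>: "geodesic_ray E \<beta>"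
    and p: "walk E p" "hd p = \<alpha> 0" "last p = \<beta> 0"
  shows "d (join_rays \<alpha> p \<beta> i) (join_rays \<alpha> p \<beta> (i + 1)) \<le> 1"
proof -
  let ?\<gamma> = "join_rays \<alpha> p \<beta>"
  have "p \<noteq> []"
    using p(1) by (simp add: walk_def)
  consider (neg) "i < 0" | (path) "0 \<le> i" "i + 1 < int (length p)" | (tail) "int (length p) \<le> i + 1"
    by linarith
  then show ?thesis
  proof cases
    case neg
    define k where "k = nat (- i - 1)"
    have "?\<gamma> i = \<alpha> (Suc k)" "?\<gamma> (i + 1) = \<alpha> k"
      using join_rays_neg[of \<alpha> p \<beta> "Suc k"] join_rays_neg[of \<alpha> p \<beta> k] neg
      unfolding k_def by (simp_all add: add.commute)
    then show ?thesis
      using gdist_ray[OF \<alpha>, of "Suc k" k] by simp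
  next
    case path
    define k where "k = nat i"
    have "?\<gamma> i = p ! k" "?\<gamma> (i + 1) = p ! Suc k"
      using join_rays_path[of p \<alpha> k \<beta>] join_rays_path[of p \<alpha> "Suc k" \<beta>] path p(2)
      unfolding k_def by (simp_all add: add.commute)
    moreover have "E (p ! k) (p ! Suc k)"
      using p(1) path unfolding walk_def k_def by simp
    ultimately show ?thesis
      by (metis gdist_eq_1_iff order.refl)
  next
    case tail
    define k where "k = nat (i + 1 - int (length p))"
    have "i = int (length p - 1) + int k" "i + 1 = int (length p - 1) + int (Suc k)"
      using tail \<open>p \<noteq> []\<close> unfolding k_def by (simp_all add: of_nat_diff Suc_le_eq)
    then have "?\<gamma> i = \<beta> k" "?\<gamma> (i + 1) = \<beta> (Suc k)"
      using join_rays_pos[of p \<alpha> \<beta>, OF \<open>p \<noteq> []\<close> p(2,3)] by metis+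
    then show ?thesis
      using gdist_ray[OF \<beta>, of k "Suc k"] by simp
  qed
qed

lemma geodesic_line_join_rays:
  assumes \<alpha>: "geodesic_ray E \<alpha>" and \<beta>: "geodesic_ray E \<beta>"
    and p: "walk E p" "hd p = \<alpha> 0" "last p = \<beta> 0" "length p = Suc L"
    and diverge: "\<And>n. d (\<alpha> n) (\<beta> n) = n + L + n"
  shows "geodesic_line E (join_rays \<alpha> p \<beta>)"
proof (rule geodesic_line_if_stretched)
  have "join_rays \<alpha> p \<beta> (int L + int t) = \<beta> t" for t
    using join_rays_pos[of p \<alpha> \<beta> t] p by (cases p) auto
  then show "2 * t + L \<le> d (join_rays \<alpha> p \<beta> (- int t)) (join_rays \<alpha> p \<beta> (int L + int t))" for t
    using diverge[of t] join_rays_neg[of \<alpha> p \<beta> t] by simp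
qed (rule gdist_join_rays_step[OF \<alpha> \<beta> p(1-3)])

lemma geodesic_line_if_finite_Int_W_ray:
  assumes \<alpha>: "geodesic_ray E \<alpha>" and \<beta>: "geodesic_ray E \<beta>"
    and fin: "finite (W_ray E \<alpha> \<inter> W_ray E \<beta>)"
  obtains \<gamma> where "geodesic_line E \<gamma>" "almost_equiv (W_neg E \<gamma>) (W_ray E \<alpha>)"
    "almost_equiv (W_pos E \<gamma>) (W_ray E \<beta>)"
proof -
  let ?X = "(W_ray E \<alpha> \<inter> W_ray E \<beta>) \<union> sepset E (\<alpha> 0) (\<beta> 0)"
  have "finite ?X"
    using fin finite_sepset by blast
  then obtain N M where N: "\<And>j. N \<le> j \<Longrightarrow> ray_hyperplane E \<alpha> j \<notin> ?X"
    and M: "\<And>j. M \<le> j \<Longrightarrow> ray_hyperplane E \<beta> j \<notin> ?X"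
    using inj_eventually_notin_finite[OF inj_ray_hyperplane[OF \<alpha>]]
      inj_eventually_notin_finite[OF inj_ray_hyperplane[OF \<beta>]] by metis
  define \<alpha>' where "\<alpha>' n = \<alpha> (N + n)" for n
  define \<beta>' where "\<beta>' n = \<beta> (M + n)" for n
  obtain p where p: "walk E p" "hd p = \<alpha>' 0" "last p = \<beta>' 0" "length p = Suc (d (\<alpha>' 0) (\<beta>' 0))"
    using shortest_walk_exists by blast
  have "ray_hyperplane E \<alpha> j \<notin> W_ray E \<beta> \<union> sepset E (\<alpha> 0) (\<beta> 0)" if "N \<le> j" for j
    using N[OF that] by (auto simp: W_ray_eq_range)
  moreover have "ray_hyperplane E \<beta> j \<notin> W_ray E \<alpha> \<union> sepset E (\<beta> 0) (\<alpha> 0)" if "M \<le> j" for j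
    using M[OF that] by (auto simp: W_ray_eq_range sepset_commute)
  ultimately have "d (\<alpha>' n) (\<beta>' n) = n + d (\<alpha>' 0) (\<beta>' 0) + n" for n
    using gdist_rays_diverge[OF \<alpha> \<beta>] unfolding \<alpha>'_def \<beta>'_def by simp
  moreover have "geodesic_ray E \<alpha>'" "geodesic_ray E \<beta>'"
    unfolding \<alpha>'_def \<beta>'_def using \<alpha> \<beta> by (simp_all add: geodesic_ray_shift)
  ultimately have "geodesic_line E (join_rays \<alpha>' p \<beta>')"
    using geodesic_line_join_rays[of \<alpha>' \<beta>' p, OF _ _ p] by blast
  moreover have "almost_equiv (W_neg E (join_rays \<alpha>' p \<beta>')) (W_ray E \<alpha>)"
    using W_neg_eq_W_ray[of "join_rays \<alpha>' p \<beta>'" \<alpha>', OF join_rays_neg] almost_equiv_W_ray_shift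
    unfolding \<alpha>'_def by metis
  moreover have "join_rays \<alpha>' p \<beta>' (int (d (\<alpha>' 0) (\<beta>' 0)) + int n) = \<beta>' n" for n
    using join_rays_pos[of p \<alpha>' \<beta>' n] p by (cases p) auto
  then have "almost_equiv (W_pos E (join_rays \<alpha>' p \<beta>')) (W_ray E \<beta>)"
    using almost_equiv_W_pos_W_ray almost_equiv_W_ray_shift almost_equiv_trans
    unfolding \<beta>'_def by metis
  ultimately show thesis
    using that by blast
qed

end

section \<open>Unidirectional boundary sets\<close>

lemma unidirectional_subset:
  assumes "unidirectional A" "B \<subseteq> A"
  shows "unidirectional B"
  unfolding unidirectional_def
proof
  fix U assume "U \<in> B"
  then obtain s where "s \<in> U" "finite {W \<in> A. lies_in U s W}"
    using assms unfolding unidirectional_def by blast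
  moreover have "{W \<in> B. lies_in U s W} \<subseteq> {W \<in> A. lies_in U s W}"
    using assms(2) by blast
  ultimately show "\<exists>s\<in>U. finite {W \<in> B. lies_in U s W}"
    using finite_subset by blast
qed

lemma UBS_Int:
  assumes A: "UBS E A" and B: "UBS E B" and inf: "infinite (A \<inter> B)"
  shows "UBS E (A \<inter> B)"
proof -
  have "inseparable E (A \<inter> B)"
    using A B unfolding UBS_def inseparable_def by blast
  moreover have "unidirectional (A \<inter> B)"
    using A unidirectional_subset[of A "A \<inter> B"] unfolding UBS_def by blast
  moreover have "A \<subseteq> hyperplanes E" "\<not> (\<exists>X\<in>A. \<exists>Y\<in>A. \<exists>Z\<in>A. facing_triple X Y Z)"
    using A unfolding UBS_def by auto
  ultimately show ?thesis
    using inf unfolding UBS_def by blast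
qed

lemma minimal_UBS_almost_equiv:
  assumes "minimal_UBS E A" "minimal_UBS E B" "infinite (A \<inter> B)"
  shows "almost_equiv A B"
proof -
  have "UBS E (A \<inter> B)"
    using assms(1,2) UBS_Int[OF _ _ assms(3)] unfolding minimal_UBS_def by blast
  then have "almost_equiv (A \<inter> B) A" "almost_equiv (A \<inter> B) B"
    using assms(1,2) unfolding minimal_UBS_def by simp_all
  then show ?thesis
    using almost_equiv_sym almost_equiv_trans by blast
qed

lemma UBS_dim_1_minimal:
  assumes "UBS_dim E U 1"
  obtains U0 where "minimal_UBS E U0" "almost_equiv U U0"
proof -
  obtain Us :: "nat \<Rightarrow> _" where "\<forall>i<1. minimal_UBS E (Us i)" "almost_equiv U (\<Union>i<1. Us i)"
    using assms unfolding UBS_dim_def by (elim exE conjE) (intro that)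
  moreover have "(\<Union>i<1. Us i) = Us 0"
    by (simp add: lessThan_Suc)
  ultimately show thesis
    using that by simp
qed

context cat0_cube_complex
begin

lemma visible_pair_or_almost_equiv:
  assumes fv: "fully_visible E"
    and U: "UBS E U" "UBS_dim E U 1" and V: "UBS E V" "UBS_dim E V 1"
  shows "visible_pair E U V \<or> almost_equiv U V"
proof -
  have "visible E U" "visible E V"
    using fv U V unfolding fully_visible_def by (metis One_nat_def)+
  then obtain \<alpha> \<beta> where \<alpha>: "geodesic_ray E \<alpha>" "almost_equiv (W_ray E \<alpha>) U"
    and \<beta>: "geodesic_ray E \<beta>" "almost_equiv (W_ray E \<beta>) V"
    unfolding visible_def by blast
  obtain U0 V0 where U0: "minimal_UBS E U0" "almost_equiv U U0"
    and V0: "minimal_UBS E V0" "almost_equiv V V0"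
    using UBS_dim_1_minimal U(2) V(2) by metis
  show ?thesis
  proof (cases "finite (U0 \<inter> V0)")
    case True
    then have "finite (W_ray E \<alpha> \<inter> W_ray E \<beta>)"
      using almost_equiv_finite_Int almost_equiv_trans \<alpha>(2) \<beta>(2) U0(2) V0(2) by metis
    then obtain \<gamma> where
      "geodesic_line E \<gamma>" "almost_equiv (W_neg E \<gamma>) U" "almost_equiv (W_pos E \<gamma>) V"
      using geodesic_line_if_finite_Int_W_ray[OF \<alpha>(1) \<beta>(1)] almost_equiv_trans \<alpha>(2) \<beta>(2) by metis
    then show ?thesis
      using \<open>visible E U\<close> \<open>visible E V\<close> unfolding visible_pair_def by blast
  next
    case False
    then have "almost_equiv U0 V0"
      using minimal_UBS_almost_equiv U0(1) V0(1) by blast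
    then show ?thesis
      using almost_equiv_trans almost_equiv_sym U0(2) V0(2) by metis
  qed
qed

end

theorem theorem3p24:
  fixes E :: "'a \<Rightarrow> 'a \<Rightarrow> bool"
  assumes "CAT0_cube_complex E"
    and "no_infinite_crossing_family E"
    and "fully_visible E"
  shows "optical E"
proof -
  interpret cat0_cube_complex E
    using assms(1) by unfold_locales
  show ?thesis
    unfolding optical_def using visible_pair_or_almost_equiv[OF assms(3)] by blast
qed

end
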